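(* Let $L\subseteq B_i$ be an SINR-feasible set of links in a bucket $B_i$, let $e\in B_i$, and let $L^g=\{e'\in L:d_{e'}>d_{e'e}\}$. Then $\sum_{e'\in L^g}\bar a_{e'}(e)\le C$ for a constant $C$ depending only on $\alpha,\beta,\varepsilon$.
   Context: Constants: $\alpha\ge0$, $N>0$, $\beta>0$. Nodes lie in the Euclidean plane. A link is $e=(s_e,r_e,P_e)$; $\mathcal{L}$ is the set of links. $d_e=d(s_e,r_e)$, $d_{e'e}=d(s_{e'},r_e)$, $S_e=P_e/d_e^\alpha$, $S_{e'e}=P_{e'}/d_{e'e}^\alpha$, $\gamma_e=\beta S_e/(S_e-\beta N)$, $\hat a_{e'}(e)=S_{e'e}/S_e$, $a_{e'}(e)=\gamma_e\hat a_{e'}(e)$, $\bar a_{e'}(e)=\min\{1,a_{e'}(e)\}$. $L$ is SINR-feasible if $S_e/(N+\sum_{e'\in L\setminus\{e\}}S_{e'e})\ge\beta$ for all $e\in L$. Buckets: $S_{\min}=\min_{e\in\mathcal{L}}S_e$, $B_i=\{e\in\mathcal{L}:2^iS_{\min}\le S_e<2^{i+1}S_{\min}\}$. Standing assumption: there is a constant $\varepsilon>0$ with $S_e/N\ge(1+\varepsilon)\beta$ for all $e\in\mathcal{L}$. *)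

theory Defs
  imports "HOL-Analysis.Analysis"
begin

type_synonym point = "real ^ 2"
type_synonym link = "point \<times> point \<times> real"

definition sender :: "link \<Rightarrow> point" where "sender e = fst e"
definition receiver :: "link \<Rightarrow> point" where "receiver e = fst (snd e)"
definition power :: "link \<Rightarrow> real" where "power e = snd (snd e)"

definition dl :: "link \<Rightarrow> real" where "dl e = dist (sender e) (receiver e)"
definition dx :: "link \<Rightarrow> link \<Rightarrow> real" where "dx e' e = dist (sender e') (receiver e)"

definition Sig :: "real \<Rightarrow> link \<Rightarrow> real" where
  "Sig \<alpha> e = power e / (dl e powr \<alpha>)"
definition Sx :: "real \<Rightarrow> link \<Rightarrow> link \<Rightarrow> real" where
  "Sx \<alpha> e' e = power e' / (dx e' e powr \<alpha>)"

definition gam :: "real \<Rightarrow> real \<Rightarrow> real \<Rightarrow> link \<Rightarrow> real" where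
  "gam \<alpha> \<beta> N e = \<beta> * Sig \<alpha> e / (Sig \<alpha> e - \<beta> * N)"

definition ahat :: "real \<Rightarrow> link \<Rightarrow> link \<Rightarrow> real" where
  "ahat \<alpha> e' e = Sx \<alpha> e' e / Sig \<alpha> e"

definition aff :: "real \<Rightarrow> real \<Rightarrow> real \<Rightarrow> link \<Rightarrow> link \<Rightarrow> real" where
  "aff \<alpha> \<beta> N e' e = gam \<alpha> \<beta> N e * ahat \<alpha> e' e"

definition abar :: "real \<Rightarrow> real \<Rightarrow> real \<Rightarrow> link \<Rightarrow> link \<Rightarrow> real" where
  "abar \<alpha> \<beta> N e' e = min 1 (aff \<alpha> \<beta> N e' e)"

definition sinr_feasible :: "real \<Rightarrow> real \<Rightarrow> real \<Rightarrow> link set \<Rightarrow> bool" where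
  "sinr_feasible \<alpha> \<beta> N L \<longleftrightarrow>
     (\<forall>e\<in>L. Sig \<alpha> e / (N + (\<Sum>e'\<in>L - {e}. Sx \<alpha> e' e)) \<ge> \<beta>)"

definition Smin :: "real \<Rightarrow> link set \<Rightarrow> real" where
  "Smin \<alpha> Ls = Min (Sig \<alpha> ` Ls)"

definition bucket :: "real \<Rightarrow> link set \<Rightarrow> nat \<Rightarrow> link set" where
  "bucket \<alpha> Ls i = {e\<in>Ls. 2 ^ i * Smin \<alpha> Ls \<le> Sig \<alpha> e \<and> Sig \<alpha> e < 2 ^ (i + 1) * Smin \<alpha> Ls}"

end

theory Submission
  imports Defs
begin

text \<open>Let \<open>G\<close> be the set of links of \<open>L\<close> whose sender is closer to the receiver of \<open>e\<close> than to
their own receiver, and let \<open>e\<^sub>1\<close> be a shortest link of \<open>G\<close>. By the triangle inequality through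
\<open>r\<^sub>e\<close> and \<open>s\<^sub>e\<^sub>1\<close>, every \<open>e\<^sub>2 \<in> G\<close> has \<open>d(s\<^sub>e\<^sub>2, r\<^sub>e\<^sub>1) \<le> 3 d\<^sub>e\<^sub>2\<close>, so it interferes with \<open>e\<^sub>1\<close> with
strength at least \<open>S\<^sub>e\<^sub>2 / 3\<^sup>\<alpha> \<ge> S\<^sub>e\<^sub>1 / (2 \<cdot> 3\<^sup>\<alpha>)\<close>, the signals in one bucket differing by a factor
below 2. Feasibility at \<open>e\<^sub>1\<close> caps the total interference by \<open>S\<^sub>e\<^sub>1 / \<beta>\<close>, hence
\<open>|G| \<le> 1 + 2 \<cdot> 3\<^sup>\<alpha> / \<beta>\<close>; as each \<open>a\<^sub>e\<^sub>'(e)\<close> is truncated at 1, this bounds the sum.\<close>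

lemma dl_pos_power_pos_if_Sig_pos:
  assumes "Sig \<alpha> f > 0"
  shows "dl f > 0" and "power f > 0"
proof -
  have "dl f \<noteq> 0" using assms by (auto simp: Sig_def)
  then show "dl f > 0" by (simp add: dl_def)
  then show "power f > 0" using assms by (simp add: Sig_def zero_less_divide_iff)
qed

lemma Sx_nonneg: "power e' \<ge> 0 \<Longrightarrow> Sx \<alpha> e' e \<ge> 0"
  by (simp add: Sx_def)

lemma dx_le_three_dl:
  assumes "dx e\<^sub>2 e < dl e\<^sub>2" "dx e\<^sub>1 e < dl e\<^sub>1" "dl e\<^sub>1 \<le> dl e\<^sub>2"
  shows "dx e\<^sub>2 e\<^sub>1 \<le> 3 * dl e\<^sub>2"
proof -
  have "dx e\<^sub>2 e\<^sub>1 \<le> dx e\<^sub>2 e + dx e\<^sub>1 e + dl e\<^sub>1"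
    unfolding dx_def dl_def by metric
  then show ?thesis using assms by linarith
qed

lemma Sig_div_powr_le_Sx:
  assumes "\<alpha> \<ge> 0" "c > 0" "power e' \<ge> 0" "dl e' > 0" "dx e' e > 0" "dx e' e \<le> c * dl e'"
  shows "Sig \<alpha> e' / c powr \<alpha> \<le> Sx \<alpha> e' e"
proof -
  have "dx e' e powr \<alpha> \<le> (c * dl e') powr \<alpha>"
    using assms by (intro powr_mono2) auto
  also have "\<dots> = c powr \<alpha> * dl e' powr \<alpha>"
    using assms by (simp add: powr_mult)
  finally have "power e' / (c powr \<alpha> * dl e' powr \<alpha>) \<le> power e' / dx e' e powr \<alpha>"
    using assms by (intro divide_left_mono) auto
  then show ?thesis by (simp add: Sig_def Sx_def mult.commute)
qed

lemma Sig_le_twice_Sig_in_bucket: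
  "e \<in> bucket \<alpha> Ls i \<Longrightarrow> e' \<in> bucket \<alpha> Ls i \<Longrightarrow> Sig \<alpha> e \<le> 2 * Sig \<alpha> e'"
  by (auto simp: bucket_def)

lemma sinr_feasible_interference_le:
  assumes "sinr_feasible \<alpha> \<beta> N L" "e \<in> L" "\<beta> > 0" "N \<ge> 0"
    and "\<And>e'. e' \<in> L \<Longrightarrow> power e' \<ge> 0"
  shows "\<beta> * (\<Sum>e'\<in>L - {e}. Sx \<alpha> e' e) \<le> Sig \<alpha> e"
proof -
  let ?I = "\<Sum>e'\<in>L - {e}. Sx \<alpha> e' e"
  have I: "?I \<ge> 0" using assms(5) by (intro sum_nonneg Sx_nonneg) auto
  have sinr: "\<beta> \<le> Sig \<alpha> e / (N + ?I)" using assms(1,2) by (simp add: sinr_feasible_def)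
  have "N + ?I > 0"
  proof (rule ccontr)
    assume "\<not> N + ?I > 0"
    then have "N + ?I = 0" using I assms(4) by linarith
    then show False using sinr assms(3) by simp
  qed
  then have "\<beta> * (N + ?I) \<le> Sig \<alpha> e" using sinr by (simp add: le_divide_eq mult.commute)
  moreover have "\<beta> * N \<ge> 0" using assms(3,4) by simp
  ultimately show ?thesis by (simp add: distrib_left)
qed

lemma card_le_if_strong_interferers:
  assumes "sinr_feasible \<alpha> \<beta> N L" "finite L" "G \<subseteq> L" "e\<^sub>1 \<in> G" "\<beta> > 0" "N \<ge> 0" "c > 0"
    and "\<And>e'. e' \<in> L \<Longrightarrow> power e' \<ge> 0" "Sig \<alpha> e\<^sub>1 > 0"
    and strong: "\<And>e\<^sub>2. e\<^sub>2 \<in> G - {e\<^sub>1} \<Longrightarrow> Sig \<alpha> e\<^sub>1 / c \<le> Sx \<alpha> e\<^sub>2 e\<^sub>1"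
  shows "real (card G) \<le> 1 + c / \<beta>"
proof -
  have finG: "finite G" using assms(2,3) finite_subset by blast
  have "real (card (G - {e\<^sub>1})) * (Sig \<alpha> e\<^sub>1 / c) \<le> (\<Sum>e\<^sub>2\<in>G - {e\<^sub>1}. Sx \<alpha> e\<^sub>2 e\<^sub>1)"
    using strong by (rule sum_bounded_below)
  also have "\<dots> \<le> (\<Sum>e\<^sub>2\<in>L - {e\<^sub>1}. Sx \<alpha> e\<^sub>2 e\<^sub>1)"
    using assms(2,3,8) by (intro sum_mono2) (auto intro: Sx_nonneg)
  also have "\<dots> \<le> Sig \<alpha> e\<^sub>1 / \<beta>"
    using sinr_feasible_interference_le[OF assms(1) _ assms(5,6,8), of e\<^sub>1] assms(3,4,5)
    by (auto simp: field_simps)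
  finally have "\<beta> * (real (card G - 1) * (Sig \<alpha> e\<^sub>1 / c)) \<le> Sig \<alpha> e\<^sub>1"
    using finG assms(4,5) by (simp add: field_simps)
  then have "\<beta> * real (card G - 1) \<le> c"
    using assms(7,9) by (simp add: field_simps)
  moreover have "card G \<ge> 1" using finG assms(4) card_0_eq by fastforce
  ultimately show ?thesis using assms(5) by (simp add: field_simps)
qed

lemma card_far_links_le:
  assumes "\<alpha> \<ge> 0" "\<beta> > 0" "N \<ge> 0" "finite Ls"
    and Sig_pos: "\<And>f. f \<in> Ls \<Longrightarrow> Sig \<alpha> f > 0"
    and distinct_nodes: "\<And>f f'. f \<in> Ls \<Longrightarrow> f' \<in> Ls \<Longrightarrow> sender f' \<noteq> receiver f"
    and "L \<subseteq> bucket \<alpha> Ls i" "sinr_feasible \<alpha> \<beta> N L"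
  shows "real (card {e'\<in>L. dl e' > dx e' e}) \<le> 1 + 2 * 3 powr \<alpha> / \<beta>"
proof -
  define G where "G = {e'\<in>L. dl e' > dx e' e}"
  have L_Ls: "L \<subseteq> Ls" using assms(7) by (auto simp: bucket_def)
  have finL: "finite L" using L_Ls assms(4) finite_subset by blast
  have power_nonneg: "power f \<ge> 0" if "f \<in> L" for f
    using dl_pos_power_pos_if_Sig_pos(2)[OF Sig_pos] that L_Ls by (meson less_imp_le subsetD)
  have "real (card G) \<le> 1 + 2 * 3 powr \<alpha> / \<beta>"
  proof (cases "G = {}")
    case True
    then show ?thesis using assms(2) by simp
  next
    case False
    define e\<^sub>1 where "e\<^sub>1 = arg_min_on dl G"
    have e\<^sub>1: "e\<^sub>1 \<in> G" "\<And>e\<^sub>2. e\<^sub>2 \<in> G \<Longrightarrow> dl e\<^sub>1 \<le> dl e\<^sub>2"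
      using arg_min_if_finite[of G dl] False finL unfolding e\<^sub>1_def G_def by force+
    have in_Ls: "f \<in> Ls" if "f \<in> G" for f using that L_Ls by (auto simp: G_def)
    have "Sig \<alpha> e\<^sub>1 / (2 * 3 powr \<alpha>) \<le> Sx \<alpha> e\<^sub>2 e\<^sub>1" if "e\<^sub>2 \<in> G - {e\<^sub>1}" for e\<^sub>2
    proof -
      have e\<^sub>2: "e\<^sub>2 \<in> G" using that by simp
      have "dx e\<^sub>2 e\<^sub>1 \<le> 3 * dl e\<^sub>2"
        using e\<^sub>1 e\<^sub>2 by (intro dx_le_three_dl[where e = e]) (auto simp: G_def)
      then have "Sig \<alpha> e\<^sub>2 / 3 powr \<alpha> \<le> Sx \<alpha> e\<^sub>2 e\<^sub>1"
        using assms(1) in_Ls[OF e\<^sub>2] in_Ls[OF e\<^sub>1(1)] distinct_nodes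
          dl_pos_power_pos_if_Sig_pos[OF Sig_pos]
        by (intro Sig_div_powr_le_Sx) (auto simp: dx_def less_le)
      moreover have "Sig \<alpha> e\<^sub>1 \<le> 2 * Sig \<alpha> e\<^sub>2"
        using e\<^sub>1(1) e\<^sub>2 assms(7) by (intro Sig_le_twice_Sig_in_bucket) (auto simp: G_def)
      ultimately show ?thesis by (simp add: field_simps)
    qed
    then show ?thesis
      using card_le_if_strong_interferers[OF assms(8) finL _ e\<^sub>1(1) assms(2,3)] power_nonneg
        Sig_pos in_Ls e\<^sub>1(1)
      by (auto simp: G_def)
  qed
  then show ?thesis by (simp add: G_def)
qed

theorem lemma4:
  fixes \<alpha> \<beta> \<epsilon> :: real
  assumes "\<alpha> \<ge> 0" and "\<beta> > 0" and "\<epsilon> > 0"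
  shows "\<exists>C::real. \<forall>(N::real) (Ls::link set) (i::nat) (L::link set) (e::link).
           N > 0 \<and> finite Ls
         \<and> (\<forall>f\<in>Ls. Sig \<alpha> f / N \<ge> (1 + \<epsilon>) * \<beta>)
         \<and> (\<forall>f\<in>Ls. \<forall>f'\<in>Ls. sender f' \<noteq> receiver f)
         \<and> L \<subseteq> bucket \<alpha> Ls i \<and> sinr_feasible \<alpha> \<beta> N L \<and> e \<in> bucket \<alpha> Ls i
         \<longrightarrow> (\<Sum>e'\<in>{e'\<in>L. dl e' > dx e' e}. abar \<alpha> \<beta> N e' e) \<le> C"
proof (intro exI allI impI, elim conjE)
  fix N Ls i L e
  assume N: "N > 0" and Ls: "finite Ls" and strong: "\<forall>f\<in>Ls. Sig \<alpha> f / N \<ge> (1 + \<epsilon>) * \<beta>"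
    and nodes: "\<forall>f\<in>Ls. \<forall>f'\<in>Ls. sender f' \<noteq> receiver f"
    and L: "L \<subseteq> bucket \<alpha> Ls i" and feasible: "sinr_feasible \<alpha> \<beta> N L"
  have Sig_pos: "Sig \<alpha> f > 0" if "f \<in> Ls" for f
  proof -
    have "(1 + \<epsilon>) * \<beta> > 0" using assms(2,3) by simp
    then have "0 < Sig \<alpha> f / N" using strong that by (meson less_le_trans)
    then show ?thesis using N by (simp add: zero_less_divide_iff)
  qed
  have "(\<Sum>e'\<in>{e'\<in>L. dl e' > dx e' e}. abar \<alpha> \<beta> N e' e) \<le> real (card {e'\<in>L. dl e' > dx e' e})"
    using sum_bounded_above[of _ "\<lambda>e'. abar \<alpha> \<beta> N e' e" 1] by (simp add: abar_def)
  also have "\<dots> \<le> 1 + 2 * 3 powr \<alpha> / \<beta>"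
    using card_far_links_le[OF assms(1,2) _ Ls Sig_pos _ L feasible] N nodes by auto
  finally show "(\<Sum>e'\<in>{e'\<in>L. dl e' > dx e' e}. abar \<alpha> \<beta> N e' e) \<le> 1 + 2 * 3 powr \<alpha> / \<beta>" .
qed

end
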